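(* Let $f=u+iv$ be polar-analytic on an open neighbourhood $\mathcal D\subset\mathbb H$ of $(r_0,\theta_0)$, with $(D_{\rm pol}f)(r_0,\theta_0)\neq0$. For $j=1,2$ let $\gamma_j$ be a $C^1$ curve in $\mathcal D$ with $\gamma_j(0)=(r_0,\theta_0)$ and tangent vector $\gamma_j'(0)$ a positive multiple of $(\cos\phi_j,\sin\phi_j)$, where $\phi_j\in\,]-\pi/2,\pi/2]$; let $\alpha\in[0,\pi]$ be the angle between these tangent vectors, so $\cos\alpha=\cos(\phi_2-\phi_1)$. Then the curves $f\circ\gamma_1$ and $f\circ\gamma_2$ (viewed in $\mathbb R^2\cong\mathbb C$) have nonzero tangent vectors at $t=0$, and the angle $\beta\in[0,\pi]$ between them satisfies $$\cos\beta=\frac{c_1c_2+r_0^2s_1s_2}{\sqrt{c_1^2+r_0^2s_1^2}\,\sqrt{c_2^2+r_0^2s_2^2}},\qquad c_j=\cos\phi_j,\ s_j=\sin\phi_j.$$ In particular $\beta$ depends only on $r_0,\phi_1,\phi_2$ and not on $f$ or $\theta_0$, and $\beta=\alpha$ when $r_0=1$.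
   Context: $\mathbb H:=\{(r,\theta): r>0,\ \theta\in\mathbb R\}$. A function $f:\mathcal D\to\mathbb C$ on an open set $\mathcal D\subset\mathbb H$ is called polar-analytic on $\mathcal D$ if for every $(r_0,\theta_0)\in\mathcal D$ the limit $$(D_{\rm pol}f)(r_0,\theta_0):=\lim_{(r,\theta)\to(r_0,\theta_0)}\frac{f(r,\theta)-f(r_0,\theta_0)}{re^{i\theta}-r_0e^{i\theta_0}}$$ exists (with $(r,\theta)\in\mathcal D$, $re^{i\theta}\neq r_0e^{i\theta_0}$), independently of how $(r,\theta)$ approaches $(r_0,\theta_0)$ within $\mathcal D$. The angle between two nonzero vectors $x,y\in\mathbb R^2$ is the unique $\beta\in[0,\pi]$ with $\cos\beta=\langle x,y\rangle/(\|x\|_2\|y\|_2)$. *)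

theory Defs
  imports "HOL-Analysis.Analysis"
begin

definition Hpol :: "(real \<times> real) set" where
  "Hpol = {p. fst p > 0}"

definition pexp :: "real \<times> real \<Rightarrow> complex" where
  "pexp p = complex_of_real (fst p) * exp (\<i> * complex_of_real (snd p))"

definition pol_filter :: "(real \<times> real) set \<Rightarrow> real \<times> real \<Rightarrow> (real \<times> real) filter" where
  "pol_filter D p = at p within {q \<in> D. pexp q \<noteq> pexp p}"

definition pol_quot :: "(real \<times> real \<Rightarrow> complex) \<Rightarrow> real \<times> real \<Rightarrow> real \<times> real \<Rightarrow> complex" where
  "pol_quot f p q = (f q - f p) / (pexp q - pexp p)"

definition polar_analytic_on :: "(real \<times> real \<Rightarrow> complex) \<Rightarrow> (real \<times> real) set \<Rightarrow> bool" where
  "polar_analytic_on f D \<longleftrightarrow> (\<forall>p\<in>D. \<exists>l. (pol_quot f p \<longlongrightarrow> l) (pol_filter D p))"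

definition D_pol :: "(real \<times> real \<Rightarrow> complex) \<Rightarrow> (real \<times> real) set \<Rightarrow> real \<times> real \<Rightarrow> complex" where
  "D_pol f D p = Lim (pol_filter D p) (pol_quot f p)"

definition vec_angle :: "'a::real_inner \<Rightarrow> 'a \<Rightarrow> real" where
  "vec_angle x y = arccos (inner x y / (norm x * norm y))"

end

theory Submission
  imports Defs
begin

text \<open>
  Since \<open>pexp\<close> is injective near a point of the half-plane, polar analyticity at
  \<open>p = (r\<^sub>0, \<theta>\<^sub>0)\<close> yields a Caratheodory factorisation
  \<open>f q - f p = Q q * (pexp q - pexp p)\<close> with \<open>Q\<close> continuous at \<open>p\<close> and \<open>Q p = D_pol f D p\<close>.
  Hence \<open>(f \<circ> \<gamma>)'(0) = D_pol f D p * (pexp \<circ> \<gamma>)'(0)\<close>, and for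
  \<open>\<gamma>'(0) = k (cos \<phi>, sin \<phi>)\<close> the polar coordinates give
  \<open>(pexp \<circ> \<gamma>)'(0) = k e\<^sup>i\<^sup>\<theta>\<^sup>0 (cos \<phi> + i r\<^sub>0 sin \<phi>)\<close>.
  Multiplication by the nonzero number \<open>D_pol f D p * e\<^sup>i\<^sup>\<theta>\<^sup>0\<close> is a rotation-dilation,
  so \<open>\<beta>\<close> is the angle between \<open>cos \<phi>\<^sub>j + i r\<^sub>0 sin \<phi>\<^sub>j\<close>; for \<open>r\<^sub>0 = 1\<close> these are
  the tangent directions of the \<open>\<gamma>\<^sub>j\<close> themselves.
\<close>

lemma has_vector_derivative_iff_tendsto_quotient:
  fixes F :: "real \<Rightarrow> 'a::real_normed_vector"
  shows "(F has_vector_derivative F') (at x) \<longleftrightarrow>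
         ((\<lambda>t. (F t - F x) /\<^sub>R (t - x)) \<longlongrightarrow> F') (at x)"
proof -
  have "\<forall>\<^sub>F t in at x. norm (F t - F x - (t - x) *\<^sub>R F') / norm (t - x)
                      = norm ((F t - F x) /\<^sub>R (t - x) - F')"
  proof (rule eventually_mono[OF eventually_neq_at_within])
    fix t assume "t \<noteq> x"
    then have "F t - F x - (t - x) *\<^sub>R F' = (t - x) *\<^sub>R ((F t - F x) /\<^sub>R (t - x) - F')"
      by (simp add: scaleR_diff_right)
    with \<open>t \<noteq> x\<close> show "norm (F t - F x - (t - x) *\<^sub>R F') / norm (t - x)
                      = norm ((F t - F x) /\<^sub>R (t - x) - F')"
      by simp
  qed
  then show ?thesis
    unfolding has_vector_derivative_def has_derivative_iff_norm
    by (simp add: bounded_linear_scaleR_left tendsto_cong tendsto_norm_zero_iff LIM_zero_iff)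
qed

lemma has_vector_derivative_caratheodory_comp:
  fixes \<gamma> :: "real \<Rightarrow> 'a::t2_space" and f g Q :: "'a \<Rightarrow> 'b::real_normed_field"
  assumes N: "open N" "\<gamma> x \<in> N"
    and factor: "\<And>q. q \<in> N \<Longrightarrow> f q - f (\<gamma> x) = Q q * (g q - g (\<gamma> x))"
    and Q: "isCont Q (\<gamma> x)" and \<gamma>: "isCont \<gamma> x"
    and g: "((g \<circ> \<gamma>) has_vector_derivative G) (at x)"
  shows "((f \<circ> \<gamma>) has_vector_derivative Q (\<gamma> x) * G) (at x)"
proof -
  have \<gamma>_lim: "(\<gamma> \<longlongrightarrow> \<gamma> x) (at x)"
    using \<gamma> by (simp add: isCont_def)
  have "((\<lambda>t. Q (\<gamma> t) * ((g (\<gamma> t) - g (\<gamma> x)) /\<^sub>R (t - x))) \<longlongrightarrow> Q (\<gamma> x) * G) (at x)"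
    using isCont_tendsto_compose[OF Q \<gamma>_lim] g
    by (intro tendsto_mult) (simp_all add: has_vector_derivative_iff_tendsto_quotient)
  moreover have "\<forall>\<^sub>F t in at x. Q (\<gamma> t) * ((g (\<gamma> t) - g (\<gamma> x)) /\<^sub>R (t - x))
                                = (f (\<gamma> t) - f (\<gamma> x)) /\<^sub>R (t - x)"
    using topological_tendstoD[OF \<gamma>_lim N] by eventually_elim (simp add: factor)
  ultimately have "((\<lambda>t. (f (\<gamma> t) - f (\<gamma> x)) /\<^sub>R (t - x)) \<longlongrightarrow> Q (\<gamma> x) * G) (at x)"
    by (rule Lim_transform_eventually)
  then show ?thesis
    by (simp add: has_vector_derivative_iff_tendsto_quotient)
qed

lemma pexp_eq_Complex: "pexp q = Complex (fst q * cos (snd q)) (fst q * sin (snd q))"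
  unfolding pexp_def by (simp add: cis_conv_exp[symmetric] complex_eq_iff)

lemma has_vector_derivative_pexp_comp:
  fixes \<gamma> :: "real \<Rightarrow> real \<times> real"
  assumes "(\<gamma> has_vector_derivative (u, v)) (at x)"
  shows "((pexp \<circ> \<gamma>) has_vector_derivative
           exp (\<i> * snd (\<gamma> x)) * Complex u (fst (\<gamma> x) * v)) (at x)"
proof -
  have r: "((\<lambda>t. fst (\<gamma> t)) has_real_derivative u) (at x)"
    and \<theta>: "((\<lambda>t. snd (\<gamma> t)) has_real_derivative v) (at x)"
    using bounded_linear.has_vector_derivative[OF bounded_linear_fst assms]
      bounded_linear.has_vector_derivative[OF bounded_linear_snd assms]
    by (simp_all add: has_real_derivative_iff_has_vector_derivative)
  have "((\<lambda>t. fst (\<gamma> t) * cos (snd (\<gamma> t))) has_real_derivative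
          u * cos (snd (\<gamma> x)) - fst (\<gamma> x) * v * sin (snd (\<gamma> x))) (at x)"
    "((\<lambda>t. fst (\<gamma> t) * sin (snd (\<gamma> t))) has_real_derivative
          u * sin (snd (\<gamma> x)) + fst (\<gamma> x) * v * cos (snd (\<gamma> x))) (at x)"
    by (auto intro!: derivative_eq_intros r \<theta>)
  then show ?thesis
    by (simp add: has_vector_derivative_complex_iff o_def pexp_eq_Complex
        has_real_derivative_iff_has_vector_derivative cis_conv_exp[symmetric] algebra_simps)
qed

lemma pexp_eq_imp_eq:
  assumes "fst p > 0" "fst q > 0" "q \<in> ball p (2 * pi)" "pexp q = pexp p"
  shows "q = p"
proof -
  have "norm (pexp q) = fst q" "norm (pexp p) = fst p"
    using assms(1,2) by (simp_all add: pexp_def norm_mult)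
  with assms(4) have r: "fst q = fst p"
    by simp
  with assms(1,4) have "exp (\<i> * snd q) = exp (\<i> * snd p)"
    by (simp add: pexp_def)
  then obtain n :: int where "\<i> * snd q = \<i> * snd p + (of_int (2 * n) * pi) * \<i>"
    using exp_eq by blast
  then have n: "snd q = snd p + 2 * n * pi"
    by (simp add: complex_eq_iff)
  have "\<bar>snd q - snd p\<bar> \<le> dist q p"
    using dist_snd_le[of q p] by (simp add: dist_real_def)
  also have "\<dots> < 2 * pi"
    using assms(3) by (simp add: dist_commute)
  finally have "\<bar>n\<bar> < 1"
    by (simp add: n abs_mult)
  with n r show ?thesis
    by (simp add: prod_eq_iff)
qed

lemma pol_filter_eq_at:
  assumes "open D" "D \<subseteq> Hpol" "p \<in> D"
  shows "pol_filter D p = at p"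
proof -
  let ?N = "D \<inter> ball p (2 * pi)"
  have "fst p > 0"
    using assms(2,3) by (auto simp: Hpol_def)
  then have "{q \<in> D. pexp q \<noteq> pexp p} \<inter> ?N - {p} = UNIV \<inter> ?N - {p}"
    using assms(2) pexp_eq_imp_eq[of p] by (force simp: Hpol_def)
  from at_within_nhd[OF _ _ this] assms show ?thesis
    by (simp add: pol_filter_def open_Int)
qed

lemma polar_analytic_on_caratheodory:
  assumes "open D" "D \<subseteq> Hpol" "polar_analytic_on f D" "p \<in> D"
  obtains N Q where "open N" "p \<in> N" "isCont Q p" "Q p = D_pol f D p"
    "\<And>q. q \<in> N \<Longrightarrow> f q - f p = Q q * (pexp q - pexp p)"
proof -
  have filter: "pol_filter D p = at p"
    using assms(1,2,4) by (rule pol_filter_eq_at)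
  obtain l where l: "(pol_quot f p \<longlongrightarrow> l) (at p)"
    using assms(3,4) filter unfolding polar_analytic_on_def by auto
  then have "D_pol f D p = l"
    unfolding D_pol_def filter by (rule tendsto_Lim[OF at_neq_bot])
  define Q where "Q q = (if q = p then l else pol_quot f p q)" for q
  have "isCont Q p"
  proof -
    have "\<forall>\<^sub>F q in at p. pol_quot f p q = Q q"
      by (rule eventually_mono[OF eventually_neq_at_within[of p]]) (simp add: Q_def)
    with l have "(Q \<longlongrightarrow> l) (at p)"
      by (rule Lim_transform_eventually)
    then show ?thesis
      by (simp add: isCont_def Q_def)
  qed
  moreover have "f q - f p = Q q * (pexp q - pexp p)" if "q \<in> D \<inter> ball p (2 * pi)" for q
    using that assms(2,4) pexp_eq_imp_eq[of p q]
    by (auto simp: Q_def pol_quot_def Hpol_def)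
  ultimately show ?thesis
    using that[of "D \<inter> ball p (2 * pi)" Q] assms(1,4) \<open>D_pol f D p = l\<close>
    by (auto simp: Q_def)
qed

lemma has_vector_derivative_polar_analytic_comp:
  fixes \<gamma> :: "real \<Rightarrow> real \<times> real"
  assumes "open D" "D \<subseteq> Hpol" "polar_analytic_on f D" "\<gamma> x \<in> D"
    and \<gamma>: "(\<gamma> has_vector_derivative (u, v)) (at x)"
  shows "((f \<circ> \<gamma>) has_vector_derivative
           D_pol f D (\<gamma> x) * exp (\<i> * snd (\<gamma> x)) * Complex u (fst (\<gamma> x) * v)) (at x)"
proof -
  obtain N Q where N: "open N" "\<gamma> x \<in> N" and Q: "isCont Q (\<gamma> x)" "Q (\<gamma> x) = D_pol f D (\<gamma> x)"
    and factor: "\<And>q. q \<in> N \<Longrightarrow> f q - f (\<gamma> x) = Q q * (pexp q - pexp (\<gamma> x))"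
    using polar_analytic_on_caratheodory[OF assms(1-4)] by blast
  have "isCont \<gamma> x"
    using \<gamma> by (rule has_vector_derivative_continuous)
  from has_vector_derivative_caratheodory_comp[OF N factor Q(1) this
      has_vector_derivative_pexp_comp[OF \<gamma>]]
  show ?thesis
    by (simp add: Q(2) mult.assoc)
qed

lemma has_vector_derivative_polar_analytic_comp_direction:
  fixes \<gamma> :: "real \<Rightarrow> real \<times> real"
  assumes "open D" "D \<subseteq> Hpol" "polar_analytic_on f D" "\<gamma> x \<in> D" "\<gamma> differentiable (at x)"
    and "vector_derivative \<gamma> (at x) = k *\<^sub>R (cos \<phi>, sin \<phi>)"
  shows "((f \<circ> \<gamma>) has_vector_derivative
           D_pol f D (\<gamma> x) * exp (\<i> * snd (\<gamma> x)) * (k *\<^sub>R Complex (cos \<phi>) (fst (\<gamma> x) * sin \<phi>)))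
         (at x)"
proof -
  have "(\<gamma> has_vector_derivative (k * cos \<phi>, k * sin \<phi>)) (at x)"
    using assms(5,6) by (simp add: vector_derivative_works)
  note has_vector_derivative_polar_analytic_comp[where \<gamma> = \<gamma> and x = x, OF assms(1-4) this]
  moreover have "Complex (k * cos \<phi>) (fst (\<gamma> x) * (k * sin \<phi>))
                 = k *\<^sub>R Complex (cos \<phi>) (fst (\<gamma> x) * sin \<phi>)"
    by (simp add: complex_eq_iff)
  ultimately show ?thesis
    by simp
qed

lemma cos_vec_angle:
  fixes x y :: "'a::real_inner"
  shows "cos (vec_angle x y) = inner x y / (norm x * norm y)"
proof -
  have "\<bar>inner x y\<bar> \<le> norm x * norm y"
    by (rule Cauchy_Schwarz_ineq2)
  then have "\<bar>inner x y / (norm x * norm y)\<bar> \<le> 1"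
    by (cases "norm x * norm y = 0") (simp_all add: abs_divide)
  then show ?thesis
    unfolding vec_angle_def by (rule cos_arccos_abs)
qed

lemma vec_angle_scaleR:
  fixes x y :: "'a::real_inner"
  assumes "a > 0" "b > 0"
  shows "vec_angle (a *\<^sub>R x) (b *\<^sub>R y) = vec_angle x y"
  using assms by (simp add: vec_angle_def)

lemma vec_angle_mult_left:
  fixes c z w :: complex
  assumes "c \<noteq> 0"
  shows "vec_angle (c * z) (c * w) = vec_angle z w"
proof -
  have "inner (c * z) (c * w) = (cmod c)\<^sup>2 * inner z w"
    unfolding inner_complex_def cmod_power2 by (simp add: algebra_simps power2_eq_square)
  with assms show ?thesis
    by (simp add: vec_angle_def norm_mult power2_eq_square)
qed

lemma vec_angle_Complex: "vec_angle (Complex a b) (Complex c d) = vec_angle (a, b) (c, d)"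
  by (simp add: vec_angle_def inner_complex_def complex_norm norm_prod_def)

lemma Complex_cos_sin_neq_zero:
  assumes "r \<noteq> 0"
  shows "Complex (cos \<phi>) (r * sin \<phi>) \<noteq> 0"
proof
  assume "Complex (cos \<phi>) (r * sin \<phi>) = 0"
  with assms have "cos \<phi> = 0" "sin \<phi> = 0"
    by (simp_all add: complex_eq_iff)
  with sin_cos_squared_add[of \<phi>] show False
    by simp
qed

theorem proposition4:
  fixes f :: "real \<times> real \<Rightarrow> complex"
    and D :: "(real \<times> real) set"
    and r0 \<theta>0 \<phi>1 \<phi>2 a1 b1 a2 b2 :: real
    and \<gamma>1 \<gamma>2 :: "real \<Rightarrow> real \<times> real"
  assumes D_open: "open D" and D_H: "D \<subseteq> Hpol" and p0: "(r0, \<theta>0) \<in> D"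
    and f_pa: "polar_analytic_on f D"
    and Dpol_nz: "D_pol f D (r0, \<theta>0) \<noteq> 0"
    and I1: "a1 < 0" "0 < b1" and I2: "a2 < 0" "0 < b2"
    and C1_1: "\<gamma>1 C1_differentiable_on {a1<..<b1}" and in1: "\<gamma>1 ` {a1<..<b1} \<subseteq> D"
    and C1_2: "\<gamma>2 C1_differentiable_on {a2<..<b2}" and in2: "\<gamma>2 ` {a2<..<b2} \<subseteq> D"
    and start1: "\<gamma>1 0 = (r0, \<theta>0)" and start2: "\<gamma>2 0 = (r0, \<theta>0)"
    and phi1: "-pi/2 < \<phi>1" "\<phi>1 \<le> pi/2" and phi2: "-pi/2 < \<phi>2" "\<phi>2 \<le> pi/2"
    and tan1: "\<exists>k>0. vector_derivative \<gamma>1 (at 0) = k *\<^sub>R (cos \<phi>1, sin \<phi>1)"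
    and tan2: "\<exists>k>0. vector_derivative \<gamma>2 (at 0) = k *\<^sub>R (cos \<phi>2, sin \<phi>2)"
  shows "(f \<circ> \<gamma>1) differentiable (at 0) \<and> (f \<circ> \<gamma>2) differentiable (at 0)
    \<and> vector_derivative (f \<circ> \<gamma>1) (at 0) \<noteq> 0 \<and> vector_derivative (f \<circ> \<gamma>2) (at 0) \<noteq> 0
    \<and> cos (vec_angle (vector_derivative (f \<circ> \<gamma>1) (at 0)) (vector_derivative (f \<circ> \<gamma>2) (at 0)))
        = (cos \<phi>1 * cos \<phi>2 + r0\<^sup>2 * sin \<phi>1 * sin \<phi>2)
          / (sqrt ((cos \<phi>1)\<^sup>2 + r0\<^sup>2 * (sin \<phi>1)\<^sup>2) * sqrt ((cos \<phi>2)\<^sup>2 + r0\<^sup>2 * (sin \<phi>2)\<^sup>2))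
    \<and> (r0 = 1 \<longrightarrow>
        vec_angle (vector_derivative (f \<circ> \<gamma>1) (at 0)) (vector_derivative (f \<circ> \<gamma>2) (at 0))
        = vec_angle (vector_derivative \<gamma>1 (at 0)) (vector_derivative \<gamma>2 (at 0)))"
proof -
  have r0: "r0 > 0"
    using D_H p0 by (auto simp: Hpol_def)
  define M where "M = D_pol f D (r0, \<theta>0) * exp (\<i> * \<theta>0)"
  define z where "z \<phi> = Complex (cos \<phi>) (r0 * sin \<phi>)" for \<phi>
  obtain k1 k2 where k1: "k1 > 0" "vector_derivative \<gamma>1 (at 0) = k1 *\<^sub>R (cos \<phi>1, sin \<phi>1)"
    and k2: "k2 > 0" "vector_derivative \<gamma>2 (at 0) = k2 *\<^sub>R (cos \<phi>2, sin \<phi>2)"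
    using tan1 tan2 by blast
  have "\<gamma>1 differentiable (at 0)" "\<gamma>2 differentiable (at 0)"
    using C1_1 C1_2 I1 I2 by (auto simp: C1_differentiable_on_eq)
  then have d1: "((f \<circ> \<gamma>1) has_vector_derivative M * (k1 *\<^sub>R z \<phi>1)) (at 0)"
    and d2: "((f \<circ> \<gamma>2) has_vector_derivative M * (k2 *\<^sub>R z \<phi>2)) (at 0)"
    using has_vector_derivative_polar_analytic_comp_direction[OF D_open D_H f_pa _ _ k1(2)]
      has_vector_derivative_polar_analytic_comp_direction[OF D_open D_H f_pa _ _ k2(2)]
      start1 start2 p0 by (simp_all add: M_def z_def)
  have "M \<noteq> 0" "z \<phi>1 \<noteq> 0" "z \<phi>2 \<noteq> 0"
    using Dpol_nz r0 Complex_cos_sin_neq_zero by (simp_all add: M_def z_def)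
  moreover have "vec_angle (M * (k1 *\<^sub>R z \<phi>1)) (M * (k2 *\<^sub>R z \<phi>2)) = vec_angle (z \<phi>1) (z \<phi>2)"
    using \<open>M \<noteq> 0\<close> k1(1) k2(1) by (simp add: vec_angle_mult_left vec_angle_scaleR)
  moreover have "cos (vec_angle (z \<phi>1) (z \<phi>2)) = (cos \<phi>1 * cos \<phi>2 + r0\<^sup>2 * sin \<phi>1 * sin \<phi>2)
      / (sqrt ((cos \<phi>1)\<^sup>2 + r0\<^sup>2 * (sin \<phi>1)\<^sup>2) * sqrt ((cos \<phi>2)\<^sup>2 + r0\<^sup>2 * (sin \<phi>2)\<^sup>2))"
    by (simp add: cos_vec_angle z_def inner_complex_def complex_norm power_mult_distrib power2_eq_square mult_ac)
  moreover have "vec_angle (vector_derivative \<gamma>1 (at 0)) (vector_derivative \<gamma>2 (at 0))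
      = vec_angle (z \<phi>1) (z \<phi>2)" if "r0 = 1"
    using that unfolding k1(2) k2(2) vec_angle_scaleR[OF k1(1) k2(1)]
    by (simp add: z_def vec_angle_Complex)
  ultimately show ?thesis
    using d1 d2 k1(1) k2(1) by (auto simp: vector_derivative_at intro: differentiableI_vector)
qed

end
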